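(* Let $\theta\in\mathbb{F}_{q^3}^*$. Then $\mathrm{Pr}(\Pi_\theta)=\mathcal S_{\theta^2}$ and $\mathrm{Sp}(\Pi_\theta)=\mathcal S_{-\theta^2}$.
   Context: Let $q$ be a prime power, $\mathbb{F}_{q^3}^*=\mathbb{F}_{q^3}\setminus\{0\}$. Points of $\mathrm{PG}(2,q^3)$ have homogeneous coordinates $(x,y,z)$ and lines $[a,b,c]$. Let $T=(0,0,1)$ and let $m_T$ be the line $[0,0,1]$ (joining $(1,0,0)$ and $(0,1,0)$). For $\theta\in\mathbb{F}_{q^3}^*$ let $\mathcal S_\theta=\{(x\theta,x^q,0):x\in\mathbb{F}_{q^3}^*\}\subset m_T$ and let $\Pi_\theta=\{(r\theta^{q+1},r^q,r^{q^2}\theta):r\in\mathbb{F}_{q^3}^*\}$, which is a subplane of order $q$ (an $\mathbb{F}_q$-plane); its lines are the lines meeting it in $q+1$ points. For an $\mathbb{F}_q$-plane $\mathcal B$ not containing $T$ and with no line equal to $m_T$, the projection is $\mathrm{Pr}(\mathcal B)=\{TP\cap m_T: P\text{ a point of }\mathcal B\}$ and the splash is $\mathrm{Sp}(\mathcal B)=\{\ell\cap m_T:\ell\text{ a line of }\mathcal B\}$. *)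

theory Defs
  imports Main "HOL-Computational_Algebra.Primes"
begin

text \<open>Homogeneous coordinates: nonzero triples over a field; a point (or line) of
PG(2,F) is the set of all nonzero scalar multiples of a nonzero triple.\<close>

type_synonym 'a vec3 = "'a \<times> 'a \<times> 'a"

definition smul3 :: "'a::field \<Rightarrow> 'a vec3 \<Rightarrow> 'a vec3" where
  "smul3 c v = (case v of (x,y,z) \<Rightarrow> (c*x, c*y, c*z))"

definition proj :: "'a::field vec3 \<Rightarrow> 'a vec3 set" where
  "proj v = {smul3 c v | c. c \<noteq> 0}"

definition pg_points :: "'a::field vec3 set set" where
  "pg_points = {proj v | v. v \<noteq> (0,0,0)}"

text \<open>Lines are represented the same way, by their (dual) coordinates [a,b,c].\<close>
definition pg_lines :: "'a::field vec3 set set" where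
  "pg_lines = {proj v | v. v \<noteq> (0,0,0)}"

definition dot3 :: "'a::field vec3 \<Rightarrow> 'a vec3 \<Rightarrow> 'a" where
  "dot3 v w = (case v of (x,y,z) \<Rightarrow> case w of (a,b,c) \<Rightarrow> a*x + b*y + c*z)"

definition cross3 :: "'a::field vec3 \<Rightarrow> 'a vec3 \<Rightarrow> 'a vec3" where
  "cross3 v w = (case v of (x1,y1,z1) \<Rightarrow> case w of (x2,y2,z2) \<Rightarrow>
      (y1*z2 - z1*y2, z1*x2 - x1*z2, x1*y2 - y1*x2))"

definition incid :: "'a::field vec3 set \<Rightarrow> 'a vec3 set \<Rightarrow> bool" where
  "incid P L \<longleftrightarrow> (\<exists>v\<in>P. \<exists>w\<in>L. dot3 v w = 0)"

definition join :: "'a::field vec3 set \<Rightarrow> 'a vec3 set \<Rightarrow> 'a vec3 set" where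
  "join P Q = proj (cross3 (SOME v. v \<in> P) (SOME w. w \<in> Q))"

definition meet :: "'a::field vec3 set \<Rightarrow> 'a vec3 set \<Rightarrow> 'a vec3 set" where
  "meet L M = proj (cross3 (SOME v. v \<in> L) (SOME w. w \<in> M))"

definition ptT :: "'a::field vec3 set" where "ptT = proj (0,0,1)"
definition lineT :: "'a::field vec3 set" where "lineT = proj (0,0,1)"

definition S_set :: "nat \<Rightarrow> 'a::field \<Rightarrow> 'a vec3 set set" where
  "S_set q \<theta> = {proj (x*\<theta>, x^q, 0) | x. x \<noteq> 0}"

definition Pi_set :: "nat \<Rightarrow> 'a::field \<Rightarrow> 'a vec3 set set" where
  "Pi_set q \<theta> = {proj (r*\<theta>^(q+1), r^q, r^(q^2)*\<theta>) | r. r \<noteq> 0}"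

text \<open>Lines of an F_q-plane B: lines of PG(2,q^3) meeting B in q+1 points.\<close>
definition plane_lines :: "nat \<Rightarrow> 'a::field vec3 set set \<Rightarrow> 'a vec3 set set" where
  "plane_lines q B = {L \<in> pg_lines. card {P \<in> B. incid P L} = q + 1}"

definition projection :: "'a::field vec3 set set \<Rightarrow> 'a vec3 set set" where
  "projection B = {meet (join ptT P) lineT | P. P \<in> B}"

definition splash :: "nat \<Rightarrow> 'a::field vec3 set set \<Rightarrow> 'a vec3 set set" where
  "splash q B = {meet L lineT | L. L \<in> plane_lines q B}"

end

theory Submission
  imports Defs "HOL-Computational_Algebra.Polynomial"
begin

(* Write P(r) = (r \<theta>^(q+1), r^q, r^(q^2) \<theta>) for the points of \<Pi>_\<theta>.  The line T P(r) meets m_T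
   in (r \<theta>^(q+1), r^q, 0), the point of S_(\<theta>^2) with parameter r/\<theta>.  Dually, P(r) lies on the
   line L(l) = [\<theta> l, \<theta>^(q+2) l^q, \<theta>^(q+1) l^(q^2)] iff the trace Tr(l r) = l r + (l r)^q + (l r)^(q^2)
   vanishes.  The kernel of the trace has q^2 elements and F_q^* acts on its nonzero elements with
   orbits corresponding to points, so every L(l) contains q+1 points of \<Pi>_\<theta>; conversely the line
   through P(r1) and P(r2) is L(r1^q r2^(q^2) - r1^(q^2) r2^q).  So the lines of \<Pi>_\<theta> are exactly
   the L(l), and L(l) meets m_T in the point of S_(-\<theta>^2) with parameter 1/(l \<theta>).
   The counts |F_q| = q and |ker Tr| = q^2 come from the additive maps x^q - x and Tr: the image
   of the first lies in the kernel of the second, so the product of the two kernel sizes is at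
   least q^3, while degree bounds give at most q and q^2. *)

section \<open>Homogeneous coordinates\<close>

lemma smul3_simp [simp]: "smul3 c (x, y, z) = (c * x, c * y, c * z)"
  by (simp add: smul3_def)

lemma smul3_smul3: "smul3 d (smul3 c v) = smul3 (d * c) v"
  by (cases v) (simp add: mult.assoc)

lemma in_proj_self: "v \<in> proj v"
  unfolding proj_def by (cases v) (auto intro: exI[of _ 1])

lemma proj_smul3:
  assumes "(c::'a::field) \<noteq> 0"
  shows "proj (smul3 c v) = proj v"
proof -
  have "proj (smul3 c v) \<subseteq> proj v"
    unfolding proj_def using assms by (auto simp: smul3_smul3)
  moreover have "smul3 e v \<in> proj (smul3 c v)" if "e \<noteq> 0" for e
  proof -
    have "smul3 e v = smul3 (e / c) (smul3 c v)" using assms by (simp add: smul3_smul3)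
    then show ?thesis unfolding proj_def using assms that by auto
  qed
  ultimately show ?thesis unfolding proj_def by blast
qed

lemma proj_eq_iff: "proj v = proj w \<longleftrightarrow> (\<exists>c::'a::field. c \<noteq> 0 \<and> w = smul3 c v)"
proof
  assume "proj v = proj w"
  then show "\<exists>c. c \<noteq> 0 \<and> w = smul3 c v"
    using in_proj_self[of w] unfolding proj_def by auto
qed (auto simp: proj_smul3)

lemma some_in_proj: "\<exists>c::'a::field. c \<noteq> 0 \<and> (SOME u. u \<in> proj v) = smul3 c v"
  using someI[of "\<lambda>u. u \<in> proj v", OF in_proj_self] unfolding proj_def by auto

lemma cross3_smul3: "cross3 (smul3 c v) (smul3 d w) = smul3 (c * d) (cross3 v w)"
  by (cases v; cases w) (simp add: cross3_def algebra_simps)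

lemma dot3_smul3: "dot3 (smul3 c v) (smul3 d w) = c * d * dot3 v w"
  by (cases v; cases w) (simp add: dot3_def algebra_simps)

lemma meet_proj: "meet (proj v) (proj w) = proj (cross3 v (w::'a::field vec3))"
proof -
  obtain c where "c \<noteq> 0" "(SOME u. u \<in> proj v) = smul3 c v" using some_in_proj by blast
  moreover obtain d where "d \<noteq> 0" "(SOME u. u \<in> proj w) = smul3 d w" using some_in_proj by blast
  ultimately show ?thesis by (simp add: meet_def cross3_smul3 proj_smul3)
qed

lemma join_proj: "join (proj v) (proj w) = proj (cross3 v (w::'a::field vec3))"
  using meet_proj unfolding meet_def join_def by metis

lemma incid_proj: "incid (proj v) (proj w) \<longleftrightarrow> dot3 v (w::'a::field vec3) = 0"
proof
  assume "incid (proj v) (proj w)"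
  then show "dot3 v w = 0" unfolding incid_def proj_def by (auto simp: dot3_smul3)
qed (use in_proj_self[of v] in_proj_self[of w] in \<open>auto simp: incid_def\<close>)

lemma cross3_eq_0_imp_smul3:
  fixes v w :: "'a::field vec3"
  assumes "cross3 v w = (0, 0, 0)" and "w \<noteq> (0, 0, 0)"
  shows "\<exists>c. v = smul3 c w"
proof -
  obtain x1 x2 x3 where v: "v = (x1, x2, x3)" by (cases v)
  obtain n1 n2 n3 where w: "w = (n1, n2, n3)" by (cases w)
  have e: "x2 * n3 = x3 * n2" "x3 * n1 = x1 * n3" "x1 * n2 = x2 * n1"
    using assms(1) unfolding v w cross3_def by auto
  consider "n1 \<noteq> 0" | "n1 = 0" "n2 \<noteq> 0" | "n1 = 0" "n2 = 0" "n3 \<noteq> 0"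
    using assms(2) w by auto
  then show ?thesis
  proof cases
    case 1
    then show ?thesis unfolding v w using e by (intro exI[of _ "x1 / n1"]) (auto simp: field_simps)
  next
    case 2
    then show ?thesis unfolding v w using e by (intro exI[of _ "x2 / n2"]) (auto simp: field_simps)
  next
    case 3
    then show ?thesis unfolding v w using e by (intro exI[of _ "x3 / n3"]) (auto simp: field_simps)
  qed
qed

lemma cross3_cross3_eq_0:
  fixes v1 v2 w :: "'a::field vec3"
  assumes "dot3 v1 w = 0" and "dot3 v2 w = 0"
  shows "cross3 w (cross3 v1 v2) = (0, 0, 0)"
proof -
  obtain a b c where w: "w = (a, b, c)" by (cases w)
  obtain x1 y1 z1 where v1: "v1 = (x1, y1, z1)" by (cases v1)
  obtain x2 y2 z2 where v2: "v2 = (x2, y2, z2)" by (cases v2)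
  define d1 d2 where "d1 = a * x1 + b * y1 + c * z1" and "d2 = a * x2 + b * y2 + c * z2"
  have "d1 = 0" "d2 = 0" using assms unfolding d1_def d2_def w v1 v2 dot3_def by auto
  moreover have "cross3 w (cross3 v1 v2) = (d2 * x1 - d1 * x2, d2 * y1 - d1 * y2, d2 * z1 - d1 * z2)"
    unfolding d1_def d2_def w v1 v2 cross3_def by (simp add: algebra_simps)
  ultimately show ?thesis by simp
qed

lemma cross3_neq_0_if_proj_neq:
  fixes v w :: "'a::field vec3"
  assumes "v \<noteq> (0, 0, 0)" and "w \<noteq> (0, 0, 0)" and "proj v \<noteq> proj w"
  shows "cross3 v w \<noteq> (0, 0, 0)"
proof
  assume "cross3 v w = (0, 0, 0)"
  then obtain c where c: "v = smul3 c w" using cross3_eq_0_imp_smul3 assms(2) by blast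
  then have "c \<noteq> 0" using assms(1) by (cases w) auto
  then show False using assms(3) c by (simp add: proj_smul3)
qed

lemma line_eq_proj_cross3:
  fixes v1 v2 w :: "'a::field vec3"
  assumes "v1 \<noteq> (0, 0, 0)" and "v2 \<noteq> (0, 0, 0)" and "proj v1 \<noteq> proj v2"
    and "w \<noteq> (0, 0, 0)" and "dot3 v1 w = 0" and "dot3 v2 w = 0"
  shows "proj w = proj (cross3 v1 v2)"
proof -
  have n: "cross3 v1 v2 \<noteq> (0, 0, 0)" using assms(1-3) by (rule cross3_neq_0_if_proj_neq)
  obtain c where c: "w = smul3 c (cross3 v1 v2)"
    using cross3_eq_0_imp_smul3[OF cross3_cross3_eq_0[OF assms(5,6)] n] by blast
  then have "c \<noteq> 0" using assms(4) by (cases "cross3 v1 v2") auto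
  then show ?thesis using c by (simp add: proj_smul3)
qed

section \<open>Counting fibres and roots\<close>

lemma card_eq_mult_card_image:
  assumes "finite A" and "\<And>x. x \<in> A \<Longrightarrow> card {y \<in> A. f y = f x} = k"
  shows "card A = k * card (f ` A)"
proof -
  have "card A = card (\<Union>b\<in>f ` A. {y \<in> A. f y = b})"
    by (rule arg_cong[where f = card]) auto
  also have "\<dots> = (\<Sum>b\<in>f ` A. card {y \<in> A. f y = b})"
    by (rule card_UN_disjoint) (use assms(1) in auto)
  also have "\<dots> = (\<Sum>b\<in>f ` A. k)"
    using assms(2) by (intro sum.cong) auto
  finally show ?thesis by simp
qed

lemma card_kernel_mult_card_range:
  fixes f :: "'a::{ab_group_add,finite} \<Rightarrow> 'b::ab_group_add"
  assumes add: "\<And>x y. f (x + y) = f x + f y"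
  shows "card {x. f x = 0} * card (range f) = card (UNIV :: 'a set)"
proof -
  have fibre: "{y. f y = f x} = (\<lambda>k. k + x) ` {k. f k = 0}" for x
  proof (intro set_eqI iffI)
    fix y assume "y \<in> {y. f y = f x}"
    moreover have "f y = f (y - x) + f x" using add[of "y - x" x] by simp
    ultimately show "y \<in> (\<lambda>k. k + x) ` {k. f k = 0}"
      by (intro image_eqI[of _ _ "y - x"]) auto
  qed (auto simp: add)
  have "card {y. f y = f x} = card {k. f k = 0}" for x
    unfolding fibre by (rule card_image) (simp add: inj_on_def)
  then have "card (UNIV :: 'a set) = card {x. f x = 0} * card (range f)"
    by (intro card_eq_mult_card_image) auto
  then show ?thesis by simp
qed

lemma card_roots_power_add_poly_le:
  fixes p :: "'a::idom poly"
  assumes "degree p < n"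
  shows "card {x. x ^ n + poly p x = 0} \<le> n"
proof -
  define r where "r = monom 1 n + p"
  have "degree r = n"
    unfolding r_def using assms by (simp add: degree_add_eq_left degree_monom_eq)
  moreover have "coeff r n = 1"
    unfolding r_def using assms by (simp add: coeff_eq_0)
  then have "r \<noteq> 0" by auto
  moreover have "{x. x ^ n + poly p x = 0} = {x. poly r x = 0}"
    unfolding r_def by (simp add: poly_monom)
  ultimately show ?thesis using card_poly_roots_bound[of r] by simp
qed

section \<open>Finite fields\<close>

(* The library's finite_field_power_card_eq_same needs the sort finite_field, which a type
   variable of sort {field, finite} does not carry. *)
lemma power_card_UNIV_eq_self: "(x::'a::{field,finite}) ^ card (UNIV :: 'a set) = x"
proof (cases "x = 0")
  case False
  let ?U = "UNIV - {0::'a}"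
  have "(\<Prod>y\<in>?U. y) = (\<Prod>y\<in>?U. x * y)"
    by (rule prod.reindex_bij_witness[of _ "\<lambda>y. x * y" "\<lambda>y. y / x"]) (use False in simp_all)
  also have "\<dots> = x ^ card ?U * (\<Prod>y\<in>?U. y)"
    by (simp add: prod.distrib)
  finally have "1 * (\<Prod>y\<in>?U. y) = x ^ card ?U * (\<Prod>y\<in>?U. y)" by simp
  moreover have "(\<Prod>y\<in>?U. y) \<noteq> 0" by simp
  ultimately have "x ^ card ?U = 1" by (simp only: mult_cancel_right) simp
  moreover have "card ?U = card (UNIV :: 'a set) - 1"
    by (rule card_Diff_singleton) simp
  moreover have "card (UNIV :: 'a set) = Suc (card (UNIV :: 'a set) - 1)"
    using finite_UNIV_card_ge_0[where 'a = 'a] by simp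
  ultimately show ?thesis by (metis power_Suc mult_1_right)
qed (simp add: power_0_left finite_UNIV_card_ge_0)

(* Stands in for CHAR_dvd_CARD from HOL-Number_Theory.Residues, whose HOL-Algebra ancestry
   shadows the constants meet and join of the projective plane. *)
lemma of_nat_card_UNIV_eq_0: "of_nat (card (UNIV :: 'a::{ring_1,finite} set)) = (0::'a)"
proof -
  have "(\<Sum>x\<in>UNIV. x) = (\<Sum>x\<in>UNIV. x + (1::'a))"
    by (rule sum.reindex_bij_witness[of _ "\<lambda>y. y + 1" "\<lambda>y. y - 1"]) auto
  then show ?thesis by (simp add: sum.distrib)
qed

lemma CHAR_eq_if_card_UNIV_eq_prime_power:
  assumes "prime p" and "card (UNIV :: 'a::{field,finite} set) = p ^ n"
  shows "CHAR('a) = p"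
proof -
  have "prime CHAR('a)" by (simp add: finite_imp_CHAR_pos prime_CHAR_semidom)
  moreover have "of_nat (p ^ n) = (0::'a)"
    using of_nat_card_UNIV_eq_0[where 'a = 'a] assms(2) by simp
  then have "CHAR('a) dvd p ^ n"
    using of_nat_eq_0_iff_char_dvd by blast
  ultimately show ?thesis using assms(1) prime_dvd_power primes_dvd_imp_eq by blast
qed

section \<open>The subplane \<Pi> over an arbitrary field\<close>

definition trace3 :: "nat \<Rightarrow> 'a::comm_ring_1 \<Rightarrow> 'a" where
  "trace3 q x = x + x ^ q + x ^ (q^2)"

definition Pi_vec :: "nat \<Rightarrow> 'a::field \<Rightarrow> 'a \<Rightarrow> 'a vec3" where
  "Pi_vec q \<theta> r = (r * \<theta>^(q+1), r^q, r^(q^2) * \<theta>)"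

definition Pi_line_vec :: "nat \<Rightarrow> 'a::field \<Rightarrow> 'a \<Rightarrow> 'a vec3" where
  "Pi_line_vec q \<theta> l = (\<theta> * l, \<theta>^(q+2) * l^q, \<theta>^(q+1) * l^(q^2))"

lemma Pi_set_eq: "Pi_set q \<theta> = {proj (Pi_vec q \<theta> r) | r. r \<noteq> 0}"
  by (simp add: Pi_set_def Pi_vec_def)

lemma power_power_eq_power_sq: "(x ^ q) ^ q = (x::'a::monoid_mult) ^ (q^2)"
  by (simp add: power2_eq_square power_mult)

lemma trace3_mult_if_power_eq:
  assumes "c ^ q = c"
  shows "trace3 q (c * x) = c * trace3 q x"
proof -
  have "c ^ (q^2) = c" using assms by (simp flip: power_power_eq_power_sq)
  then show ?thesis using assms by (simp add: trace3_def power_mult_distrib algebra_simps)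
qed

lemma dot3_Pi_vec_Pi_line_vec:
  "dot3 (Pi_vec q \<theta> r) (Pi_line_vec q \<theta> l) = \<theta>^(q+2) * trace3 q (l * r)"
  by (simp add: Pi_vec_def Pi_line_vec_def dot3_def trace3_def power_mult_distrib algebra_simps)

lemma incid_Pi_vec_Pi_line_vec_iff:
  assumes "\<theta> \<noteq> 0"
  shows "incid (proj (Pi_vec q \<theta> r)) (proj (Pi_line_vec q \<theta> l)) \<longleftrightarrow> trace3 q (l * r) = 0"
  using assms by (simp add: incid_proj dot3_Pi_vec_Pi_line_vec)

lemma proj_Pi_vec_eq_iff:
  assumes "\<theta> \<noteq> 0" and "r \<noteq> 0"
  shows "proj (Pi_vec q \<theta> r') = proj (Pi_vec q \<theta> r) \<longleftrightarrow> (\<exists>c. c \<noteq> 0 \<and> c ^ q = c \<and> r' = c * r)"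
proof
  assume "proj (Pi_vec q \<theta> r') = proj (Pi_vec q \<theta> r)"
  then obtain c where c: "c \<noteq> 0" "Pi_vec q \<theta> r' = smul3 c (Pi_vec q \<theta> r)"
    by (metis proj_eq_iff)
  then have r': "r' = c * r" and "(c * r) ^ q = c * r ^ q"
    using assms(1) by (auto simp: Pi_vec_def)
  then have "c ^ q = c" using assms(2) by (simp add: power_mult_distrib)
  then show "\<exists>c. c \<noteq> 0 \<and> c ^ q = c \<and> r' = c * r" using c(1) r' by blast
next
  assume "\<exists>c. c \<noteq> 0 \<and> c ^ q = c \<and> r' = c * r"
  then obtain c where c: "c \<noteq> 0" "c ^ q = c" "r' = c * r" by blast
  then have "c ^ (q^2) = c" by (simp flip: power_power_eq_power_sq)
  then have "Pi_vec q \<theta> r' = smul3 c (Pi_vec q \<theta> r)"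
    using c by (simp add: Pi_vec_def power_mult_distrib algebra_simps)
  then show "proj (Pi_vec q \<theta> r') = proj (Pi_vec q \<theta> r)" using c(1) by (simp add: proj_smul3)
qed

lemma projection_Pi_set:
  assumes "\<theta> \<noteq> 0"
  shows "projection (Pi_set q \<theta>) = S_set q (\<theta>^2)"
proof -
  have meet_join: "meet (join ptT (proj (Pi_vec q \<theta> r))) lineT = proj ((r / \<theta>) * \<theta>^2, (r / \<theta>)^q, 0)"
    for r
  proof -
    have "meet (join ptT (proj (Pi_vec q \<theta> r))) lineT = proj (r * \<theta>^(q+1), r^q, 0)"
      by (simp add: ptT_def lineT_def Pi_vec_def join_proj meet_proj cross3_def)
    also have "\<dots> = proj ((r / \<theta>) * \<theta>^2, (r / \<theta>)^q, 0)"
    proof -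
      have "smul3 (1 / \<theta>^q) (r * \<theta>^(q+1), r^q, 0) = ((r / \<theta>) * \<theta>^2, (r / \<theta>)^q, 0)"
        using assms by (simp add: power2_eq_square power_divide)
      then show ?thesis using assms by (metis proj_smul3 divide_eq_0_iff one_neq_zero power_not_zero)
    qed
    finally show ?thesis .
  qed
  show ?thesis
  proof (intro set_eqI iffI)
    fix X assume "X \<in> projection (Pi_set q \<theta>)"
    then obtain r where "r \<noteq> 0" "X = meet (join ptT (proj (Pi_vec q \<theta> r))) lineT"
      unfolding projection_def Pi_set_eq by blast
    then have "X = proj ((r / \<theta>) * \<theta>^2, (r / \<theta>)^q, 0)" by (simp only: meet_join)
    moreover have "r / \<theta> \<noteq> 0" using \<open>r \<noteq> 0\<close> assms by simp
    ultimately show "X \<in> S_set q (\<theta>^2)" unfolding S_set_def by blast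
  next
    fix X assume "X \<in> S_set q (\<theta>^2)"
    then obtain x where x: "x \<noteq> 0" "X = proj (x * \<theta>^2, x^q, 0)" unfolding S_set_def by blast
    then have "X = meet (join ptT (proj (Pi_vec q \<theta> (x * \<theta>)))) lineT"
      using assms by (simp add: meet_join)
    moreover have "x * \<theta> \<noteq> 0" using x(1) assms by simp
    ultimately show "X \<in> projection (Pi_set q \<theta>)"
      unfolding projection_def Pi_set_eq by blast
  qed
qed

lemma meet_Pi_line_vec_lineT:
  assumes "\<theta> \<noteq> 0" and "l \<noteq> 0"
  shows "meet (proj (Pi_line_vec q \<theta> l)) lineT
    = proj ((1 / (l * \<theta>)) * - (\<theta>^2), (1 / (l * \<theta>))^q, 0)"
proof -
  have "meet (proj (Pi_line_vec q \<theta> l)) lineT = proj (\<theta>^(q+2) * l^q, - (\<theta> * l), 0)"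
    by (simp add: lineT_def Pi_line_vec_def meet_proj cross3_def)
  also have "\<dots> = proj ((1 / (l * \<theta>)) * - (\<theta>^2), (1 / (l * \<theta>))^q, 0)"
  proof -
    have "smul3 (- 1 / (l * \<theta>)^(q+1)) (\<theta>^(q+2) * l^q, - (\<theta> * l), 0)
        = ((1 / (l * \<theta>)) * - (\<theta>^2), (1 / (l * \<theta>))^q, 0)"
      using assms by (simp add: power2_eq_square power_divide power_mult_distrib field_simps)
    then show ?thesis using assms by (metis proj_smul3 divide_eq_0_iff neg_equal_0_iff_equal
        one_neq_zero power_not_zero mult_eq_0_iff)
  qed
  finally show ?thesis .
qed

lemma S_set_neg_eq:
  assumes "\<theta> \<noteq> 0"
  shows "S_set q (- (\<theta>^2)) = {meet (proj (Pi_line_vec q \<theta> l)) lineT | l. l \<noteq> 0}"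
proof (intro set_eqI iffI)
  fix X assume "X \<in> S_set q (- (\<theta>^2))"
  then obtain x where x: "x \<noteq> 0" "X = proj (x * - (\<theta>^2), x^q, 0)" unfolding S_set_def by blast
  define l where "l = 1 / (x * \<theta>)"
  have "l \<noteq> 0" and x_eq: "x = 1 / (l * \<theta>)" using x(1) assms by (simp_all add: l_def)
  have "X = meet (proj (Pi_line_vec q \<theta> l)) lineT"
    by (simp only: x(2) x_eq meet_Pi_line_vec_lineT[OF assms \<open>l \<noteq> 0\<close>])
  then show "X \<in> {meet (proj (Pi_line_vec q \<theta> l)) lineT | l. l \<noteq> 0}" using \<open>l \<noteq> 0\<close> by blast
next
  fix X assume "X \<in> {meet (proj (Pi_line_vec q \<theta> l)) lineT | l. l \<noteq> 0}"
  then obtain l where "l \<noteq> 0" "X = meet (proj (Pi_line_vec q \<theta> l)) lineT" by blast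
  then have "X = proj ((1 / (l * \<theta>)) * - (\<theta>^2), (1 / (l * \<theta>))^q, 0)"
    using meet_Pi_line_vec_lineT[OF assms] by simp
  moreover have "1 / (l * \<theta>) \<noteq> 0" using \<open>l \<noteq> 0\<close> assms by simp
  ultimately show "X \<in> S_set q (- (\<theta>^2))" unfolding S_set_def by blast
qed

section \<open>Frobenius in a field of order q^3\<close>

context
  fixes q :: nat
  assumes q_ge_2: "q \<ge> 2"
    and card_UNIV_eq: "card (UNIV :: 'a::{field,finite} set) = q ^ 3"
    and power_q_add: "\<And>x y :: 'a. (x + y) ^ q = x ^ q + y ^ q"
begin

lemma power_q_diff: "((x::'a) - y) ^ q = x ^ q - y ^ q"
  using power_q_add[of "x - y" y] by (simp add: algebra_simps)

lemma power_q_power_q_power_q: "(((x::'a) ^ q) ^ q) ^ q = x"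
  using power_card_UNIV_eq_self[of x] card_UNIV_eq
  by (simp add: power_mult[symmetric] power3_eq_cube)

lemma trace3_power_q_diff: "trace3 q ((x::'a) ^ q - x) = 0"
  by (simp add: trace3_def power_q_diff power_q_power_q_power_q flip: power_power_eq_power_sq)

lemma card_fixed_points_and_trace3_kernel:
  "card {x::'a. x ^ q = x} = q \<and> card {x::'a. trace3 q x = 0} = q^2"
proof -
  define F where "F = {x::'a. x ^ q = x}"
  define K where "K = {x::'a. trace3 q x = 0}"
  have F_le: "card F \<le> q"
    using card_roots_power_add_poly_le[of "[:0, -1:]" q] q_ge_2 by (simp add: F_def)
  have K_le: "card K \<le> q^2"
  proof -
    have "q < q^2" using q_ge_2 by (simp add: power2_eq_square)
    moreover have "degree ([:0, 1:] + monom (1::'a) q) \<le> q"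
      using q_ge_2 degree_add_le[of "[:0, 1:]" q "monom (1::'a) q"] by (simp add: degree_monom_eq)
    ultimately have "degree ([:0, 1:] + monom (1::'a) q) < q^2" by linarith
    then show ?thesis
      using card_roots_power_add_poly_le[of "[:0, 1:] + monom (1::'a) q" "q^2"]
      by (simp add: K_def trace3_def poly_monom algebra_simps)
  qed
  have FK: "q^3 \<le> card F * card K"
  proof -
    have "q^3 = card {x::'a. x ^ q - x = 0} * card (range (\<lambda>x::'a. x ^ q - x))"
      using card_kernel_mult_card_range[of "\<lambda>x::'a. x ^ q - x"] card_UNIV_eq
      by (simp add: power_q_add)
    also have "\<dots> \<le> card F * card K"
      using trace3_power_q_diff by (auto simp: F_def K_def intro!: card_mono)
    finally show ?thesis .
  qed
  have "q * q^2 \<le> q * card K"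
    using order_trans[OF FK mult_le_mono1[OF F_le]]
    by (simp only: power3_eq_cube power2_eq_square mult.assoc)
  then have K_eq: "card K = q^2" using K_le q_ge_2 by simp
  have "q * q^2 \<le> card F * q^2"
    using FK K_eq by (simp add: power3_eq_cube power2_eq_square)
  then have "card F = q" using F_le q_ge_2 by simp
  with K_eq show ?thesis by (simp add: F_def K_def)
qed

lemma card_nonzero_fixed_points: "card {c::'a. c \<noteq> 0 \<and> c ^ q = c} = q - 1"
proof -
  have "{c::'a. c \<noteq> 0 \<and> c ^ q = c} = {c. c ^ q = c} - {0}" by auto
  moreover have "(0::'a) \<in> {c. c ^ q = c}" using q_ge_2 by simp
  ultimately show ?thesis using card_fixed_points_and_trace3_kernel by (simp add: card_Diff_singleton)
qed

lemma card_nonzero_trace3_mult_kernel: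
  assumes "(l::'a) \<noteq> 0"
  shows "card {r. r \<noteq> 0 \<and> trace3 q (l * r) = 0} = q^2 - 1"
proof -
  define K where "K = {r. r \<noteq> 0 \<and> trace3 q (l * r) = 0}"
  have "(\<lambda>r. l * r) ` K = {x. trace3 q x = 0} - {0}"
  proof (intro set_eqI iffI)
    fix x :: 'a assume "x \<in> {x. trace3 q x = 0} - {0}"
    then have "x / l \<in> K" and "x = l * (x / l)" using assms by (simp_all add: K_def)
    then show "x \<in> (\<lambda>r. l * r) ` K" by blast
  qed (auto simp: K_def assms)
  moreover have "inj_on (\<lambda>r. l * r) K" using assms by (simp add: inj_on_def)
  moreover have "0 \<in> {x::'a. trace3 q x = 0}" using q_ge_2 by (simp add: trace3_def power_0_left)
  ultimately show ?thesis
    unfolding K_def[symmetric]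
    using card_fixed_points_and_trace3_kernel by (metis card_image card_Diff_singleton)
qed

section \<open>The lines of \<Pi>\<close>

lemma cross3_Pi_vec:
  "cross3 (Pi_vec q \<theta> r1) (Pi_vec q \<theta> (r2::'a))
    = Pi_line_vec q \<theta> (r1^q * r2^(q^2) - r1^(q^2) * r2^q)"
proof -
  define D where "D = r1^q * r2^(q^2) - r1^(q^2) * r2^q"
  have Dq: "D^q = r1^(q^2) * r2 - r1 * r2^(q^2)"
    by (simp add: D_def power_q_diff power_mult_distrib power_q_power_q_power_q
        flip: power_power_eq_power_sq)
  have Dqq: "D^(q^2) = r1 * r2^q - r1^q * r2"
    by (simp add: Dq power_q_diff power_mult_distrib power_q_power_q_power_q
        flip: power_power_eq_power_sq)
  show ?thesis
    unfolding D_def[symmetric]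
    by (simp add: Pi_vec_def Pi_line_vec_def cross3_def Dq Dqq algebra_simps)
      (simp add: D_def algebra_simps)
qed

lemma card_Pi_set_incid_Pi_line_vec:
  assumes "\<theta> \<noteq> (0::'a)" and "l \<noteq> 0"
  shows "card {P \<in> Pi_set q \<theta>. incid P (proj (Pi_line_vec q \<theta> l))} = q + 1"
proof -
  define K where "K = {r::'a. r \<noteq> 0 \<and> trace3 q (l * r) = 0}"
  define G where "G = {c::'a. c \<noteq> 0 \<and> c ^ q = c}"
  define point where "point r = proj (Pi_vec q \<theta> r)" for r
  have points: "{P \<in> Pi_set q \<theta>. incid P (proj (Pi_line_vec q \<theta> l))} = point ` K"
    unfolding Pi_set_eq K_def point_def using incid_Pi_vec_Pi_line_vec_iff[OF assms(1)] by auto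
  have fibre: "card {r' \<in> K. point r' = point r} = q - 1" if "r \<in> K" for r
  proof -
    have r: "r \<noteq> 0" "trace3 q (l * r) = 0" using that by (simp_all add: K_def)
    have "{r' \<in> K. point r' = point r} = (\<lambda>c. c * r) ` G"
    proof (intro set_eqI iffI)
      fix r' assume "r' \<in> (\<lambda>c. c * r) ` G"
      then obtain c where c: "c \<noteq> 0" "c ^ q = c" "r' = c * r" by (auto simp: G_def)
      then have "trace3 q (l * r') = c * trace3 q (l * r)"
        by (simp add: trace3_mult_if_power_eq[symmetric] ac_simps)
      then show "r' \<in> {r' \<in> K. point r' = point r}"
        using c r assms(1) by (auto simp: K_def point_def proj_Pi_vec_eq_iff)
    qed (use r assms(1) in \<open>auto simp: G_def point_def proj_Pi_vec_eq_iff\<close>)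
    moreover have "inj_on (\<lambda>c. c * r) G" using r(1) by (simp add: inj_on_def)
    ultimately show ?thesis using card_nonzero_fixed_points by (simp add: G_def card_image)
  qed
  have "(q - 1) * (q + 1) = (q - 1) * card (point ` K)"
  proof -
    have "(q - 1) * (q + 1) = q^2 - 1" by (simp add: power2_eq_square algebra_simps)
    then show ?thesis
      using card_eq_mult_card_image[of K point "q - 1"] fibre card_nonzero_trace3_mult_kernel[OF assms(2)]
      by (simp add: K_def)
  qed
  moreover have "q - 1 \<noteq> 0" using q_ge_2 by simp
  ultimately show ?thesis unfolding points using mult_left_cancel by metis
qed

lemma plane_lines_Pi_set:
  assumes "\<theta> \<noteq> (0::'a)"
  shows "plane_lines q (Pi_set q \<theta>) = {proj (Pi_line_vec q \<theta> l) | l. l \<noteq> 0}"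
proof (intro set_eqI iffI)
  fix L assume L: "L \<in> plane_lines q (Pi_set q \<theta>)"
  then obtain w where w: "w \<noteq> (0, 0, 0)" "L = proj w" unfolding plane_lines_def pg_lines_def by blast
  have "card {P \<in> Pi_set q \<theta>. incid P L} = q + 1" using L unfolding plane_lines_def by blast
  then have "\<not> card {P \<in> Pi_set q \<theta>. incid P L} \<le> Suc 0" using q_ge_2 by simp
  then obtain r1 r2 where r: "r1 \<noteq> 0" "r2 \<noteq> 0" "proj (Pi_vec q \<theta> r1) \<noteq> proj (Pi_vec q \<theta> r2)"
    "incid (proj (Pi_vec q \<theta> r1)) L" "incid (proj (Pi_vec q \<theta> r2)) L"
    unfolding card_le_Suc0_iff_eq[OF finite] Pi_set_eq by blast
  have nonzero: "Pi_vec q \<theta> r \<noteq> (0, 0, 0)" if "r \<noteq> 0" for r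
    using that assms by (simp add: Pi_vec_def)
  define D where "D = r1^q * r2^(q^2) - r1^(q^2) * r2^q"
  have cross: "cross3 (Pi_vec q \<theta> r1) (Pi_vec q \<theta> r2) = Pi_line_vec q \<theta> D"
    unfolding D_def by (rule cross3_Pi_vec)
  moreover have "L = proj (cross3 (Pi_vec q \<theta> r1) (Pi_vec q \<theta> r2))"
    using line_eq_proj_cross3[OF nonzero[OF r(1)] nonzero[OF r(2)] r(3) w(1)] r(4,5)
    by (simp add: w(2) incid_proj)
  moreover have "D \<noteq> 0"
  proof
    assume "D = 0"
    then have "Pi_line_vec q \<theta> D = (0, 0, 0)" using q_ge_2 by (simp add: Pi_line_vec_def)
    then show False
      using cross3_neq_0_if_proj_neq[OF nonzero[OF r(1)] nonzero[OF r(2)] r(3)] cross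
      by simp
  qed
  ultimately show "L \<in> {proj (Pi_line_vec q \<theta> l) | l. l \<noteq> 0}" by auto
next
  fix L assume "L \<in> {proj (Pi_line_vec q \<theta> l) | l. l \<noteq> 0}"
  then obtain l where l: "l \<noteq> 0" "L = proj (Pi_line_vec q \<theta> l)" by blast
  then have "Pi_line_vec q \<theta> l \<noteq> (0, 0, 0)" using assms by (simp add: Pi_line_vec_def)
  then have "L \<in> pg_lines" unfolding pg_lines_def l(2) by blast
  then show "L \<in> plane_lines q (Pi_set q \<theta>)"
    unfolding plane_lines_def using card_Pi_set_incid_Pi_line_vec[OF assms l(1)] l(2) by blast
qed

lemma splash_Pi_set:
  assumes "\<theta> \<noteq> (0::'a)"
  shows "splash q (Pi_set q \<theta>) = S_set q (- (\<theta>^2))"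
  unfolding splash_def plane_lines_Pi_set[OF assms] S_set_neg_eq[OF assms] by blast

end

theorem theorem5p1:
  fixes q :: nat and \<theta> :: "'a::{field,finite}"
  assumes "\<exists>p k. prime p \<and> k > 0 \<and> q = p ^ k"
    and "card (UNIV :: 'a set) = q ^ 3"
    and "\<theta> \<noteq> 0"
  shows "projection (Pi_set q \<theta>) = S_set q (\<theta>^2)
       \<and> splash q (Pi_set q \<theta>) = S_set q (- (\<theta>^2))"
proof -
  obtain p k where p: "prime p" and "k > 0" and q: "q = p ^ k" using assms(1) by blast
  have "q \<ge> 2"
    using prime_ge_2_nat[OF p] self_le_power[of p k] \<open>k > 0\<close> q by simp
  have "card (UNIV :: 'a set) = p ^ (k * 3)" using assms(2) q by (simp add: power_mult)
  then have "CHAR('a) = p" by (rule CHAR_eq_if_card_UNIV_eq_prime_power[OF p])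
  then have "(x + y) ^ q = x ^ q + y ^ q" for x y :: 'a
    using p q by (simp add: freshmans_dream')
  then show ?thesis
    using projection_Pi_set splash_Pi_set[OF \<open>q \<ge> 2\<close> assms(2)] assms(3) by blast
qed

end
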